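(* Fix $\mathsf{SNR}>0$ and integers $L\ge1$, $M\ge1$. Let $\{h_{i,j}\}_{i\ge1,\,1\le j\le L}$ be i.i.d. $\mathcal{CN}(0,1)$ and set $C_i=\frac1L\sum_{j=1}^L\log_2(1+\mathsf{SNR}|h_{i,j}|^2)$. For an initial rate $R_{\mathrm{init}}>0$ define $\mathcal{T}(R_{\mathrm{init}})=\min\bigl(M,\ \min\{t\ge1:\sum_{i=1}^tC_i>R_{\mathrm{init}}\}\bigr)$, the post-HARQ outage probability $\varepsilon(R_{\mathrm{init}})=\mathbb{P}\bigl[\sum_{i=1}^M C_i\le R_{\mathrm{init}}\bigr]$, and the HARQ goodput $$\eta_{\mathrm{HARQ}}(R_{\mathrm{init}})=\frac{R_{\mathrm{init}}\,(1-\varepsilon(R_{\mathrm{init}}))}{\mathbb{E}[\mathcal{T}(R_{\mathrm{init}})]}.$$ For a non-HARQ system with diversity order $ML$, define for $R>0$ the goodput $g_{ML}(R)=R\,(1-\varepsilon_{ML}(R))$ with $\varepsilon_{ML}(R)=\mathbb{P}\bigl[\frac{1}{ML}\sum_{k=1}^{ML}\log_2(1+\mathsf{SNR}|g_k|^2)\le R\bigr]$, $g_k$ i.i.d. $\mathcal{CN}(0,1)$, and let $R^\star_{ML}$ be the largest maximizer of $g_{ML}$ over $R>0$ (assumed to exist). Then every maximizer $R^\star_{\mathrm{init}}$ of $\eta_{\mathrm{HARQ}}$ over $R_{\mathrm{init}}>0$ satisfies $$\frac{R^\star_{\mathrm{init}}}{M}\le R^\star_{ML},$$ i.e., the optimal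 HARQ initial rate, divided by $M$, is at most the optimal transmitted rate of the non-HARQ system with diversity order $ML$.
   Context: Model: Rayleigh block fading; each HARQ round spans $L$ independently faded blocks with gains $h_{i,j}$, independent across rounds; incremental-redundancy HARQ accumulates mutual information across rounds, so a packet is decoded in the first round $t$ at which the accumulated mutual information $\sum_{i\le t}C_i$ exceeds $R_{\mathrm{init}}$; at most $M$ rounds are allowed, after which (if still undecoded) a post-HARQ outage occurs and the HARQ process restarts. $\mathcal{CN}(0,1)$ denotes a circularly symmetric complex Gaussian with unit variance. *)

theory Defs
  imports "HOL-Probability.Probability"
begin

definition CN01_density :: "complex \<Rightarrow> ennreal" where
  "CN01_density z = ennreal (exp (- (cmod z)\<^sup>2) / pi)"

definition harq_C :: "real \<Rightarrow> nat \<Rightarrow> (nat \<Rightarrow> nat \<Rightarrow> 'a \<Rightarrow> complex) \<Rightarrow> nat \<Rightarrow> 'a \<Rightarrow> real" where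
  "harq_C SNR L h i \<omega> = (1 / real L) * (\<Sum>j=1..L. log 2 (1 + SNR * (cmod (h i j \<omega>))\<^sup>2))"

definition harq_acc :: "real \<Rightarrow> nat \<Rightarrow> (nat \<Rightarrow> nat \<Rightarrow> 'a \<Rightarrow> complex) \<Rightarrow> nat \<Rightarrow> 'a \<Rightarrow> real" where
  "harq_acc SNR L h t \<omega> = (\<Sum>i=1..t. harq_C SNR L h i \<omega>)"

definition harq_T :: "real \<Rightarrow> nat \<Rightarrow> nat \<Rightarrow> (nat \<Rightarrow> nat \<Rightarrow> 'a \<Rightarrow> complex) \<Rightarrow> real \<Rightarrow> 'a \<Rightarrow> nat" where
  "harq_T SNR L M h R \<omega> =
     (if \<exists>t. 1 \<le> t \<and> harq_acc SNR L h t \<omega> > R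
      then min M (LEAST t. 1 \<le> t \<and> harq_acc SNR L h t \<omega> > R)
      else M)"

definition harq_eps :: "'a measure \<Rightarrow> real \<Rightarrow> nat \<Rightarrow> nat \<Rightarrow> (nat \<Rightarrow> nat \<Rightarrow> 'a \<Rightarrow> complex) \<Rightarrow> real \<Rightarrow> real" where
  "harq_eps P SNR L M h R = measure P {\<omega> \<in> space P. harq_acc SNR L h M \<omega> \<le> R}"

definition harq_eta :: "'a measure \<Rightarrow> real \<Rightarrow> nat \<Rightarrow> nat \<Rightarrow> (nat \<Rightarrow> nat \<Rightarrow> 'a \<Rightarrow> complex) \<Rightarrow> real \<Rightarrow> real" where
  "harq_eta P SNR L M h R =
     R * (1 - harq_eps P SNR L M h R) / (\<integral>\<omega>. real (harq_T SNR L M h R \<omega>) \<partial>P)"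

definition nonharq_eps :: "'a measure \<Rightarrow> real \<Rightarrow> nat \<Rightarrow> (nat \<Rightarrow> 'a \<Rightarrow> complex) \<Rightarrow> real \<Rightarrow> real" where
  "nonharq_eps P SNR N g R =
     measure P {\<omega> \<in> space P.
        (1 / real N) * (\<Sum>k=1..N. log 2 (1 + SNR * (cmod (g k \<omega>))\<^sup>2)) \<le> R}"

definition nonharq_goodput :: "'a measure \<Rightarrow> real \<Rightarrow> nat \<Rightarrow> (nat \<Rightarrow> 'a \<Rightarrow> complex) \<Rightarrow> real \<Rightarrow> real" where
  "nonharq_goodput P SNR N g R = R * (1 - nonharq_eps P SNR N g R)"

end

theory Submission
  imports Defs
begin

(* The HARQ goodput is a rescaled non-HARQ goodput divided by the
   expected number of rounds:
     eta(R) = M * g_ML(R / M) / E[T(R)].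
   Indeed, the post-HARQ outage event  sum_{i<=M} C_i <= R  is an event about
   M*L i.i.d. CN(0,1) block gains, and so has the same probability as the
   non-HARQ outage event at rate R/M with the M*L gains g_k.  Moreover E[T(R)]
   is >= 1 and nondecreasing in R, since a larger target rate can only delay
   decoding.  If R_init/M > R_star, then g_ML(R_init/M) < g_ML(R_star) because
   R_star is the largest maximizer, so the smaller rate M*R_star achieves a
   strictly larger numerator with a no-larger denominator, contradicting the
   optimality of R_init. *)

lemma scaled_maximizer_le_largest_maximizer:
  fixes G E :: "real \<Rightarrow> real" and m Rstar Rinit :: real
  assumes m_pos: "m > 0"
    and E_pos: "\<And>R. R > 0 \<Longrightarrow> E R > 0"
    and E_mono: "\<And>R R'. 0 < R' \<Longrightarrow> R' \<le> R \<Longrightarrow> E R' \<le> E R"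
    and G_nonneg: "\<And>R. R > 0 \<Longrightarrow> 0 \<le> G R"
    and Rstar_pos: "Rstar > 0"
    and Rstar_max: "\<And>R. R > 0 \<Longrightarrow> G R \<le> G Rstar"
    and Rstar_largest: "\<And>R. R > 0 \<Longrightarrow> G R = G Rstar \<Longrightarrow> R \<le> Rstar"
    and Rinit_pos: "Rinit > 0"
    and Rinit_max: "\<And>R. R > 0 \<Longrightarrow> m * G (R / m) / E R \<le> m * G (Rinit / m) / E Rinit"
  shows "Rinit / m \<le> Rstar"
proof (rule ccontr)
  assume "\<not> Rinit / m \<le> Rstar"
  hence above: "Rstar < Rinit / m" by simp
  define R' where "R' = m * Rstar"
  have R'_pos: "R' > 0" and R'_le: "R' \<le> Rinit"
    using m_pos Rstar_pos above by (auto simp: R'_def field_simps)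
  have scaled_pos: "Rinit / m > 0" using Rinit_pos m_pos by simp
  have "G (Rinit / m) \<noteq> G Rstar" using Rstar_largest[OF scaled_pos] above by force
  hence G_lt: "G (Rinit / m) < G Rstar" using Rstar_max[OF scaled_pos] by simp
  have "m * G (Rinit / m) / E Rinit < m * G Rstar / E Rinit"
    using G_lt m_pos E_pos[OF Rinit_pos] by (intro divide_strict_right_mono) auto
  also have "\<dots> \<le> m * G Rstar / E R'"
    using G_nonneg[OF Rstar_pos] m_pos E_pos[OF R'_pos] E_mono[OF R'_pos R'_le]
    by (intro divide_left_mono) auto
  also have "\<dots> = m * G (R' / m) / E R'" using m_pos by (simp add: R'_def)
  finally show False using Rinit_max[OF R'_pos] by simp
qed

lemma distributed_distr_borel:
  assumes "distributed M lborel X f"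
  shows "distr M borel X = density lborel f"
proof -
  have "distr M borel X = distr M lborel X" by (intro distr_cong) auto
  also have "\<dots> = density lborel f" using distributed_distr_eq_density[OF assms] .
  finally show ?thesis .
qed

lemma (in prob_space) prob_iid_sum_le:
  fixes X :: "'i \<Rightarrow> 'a \<Rightarrow> 'b::topological_space" and f :: "'b \<Rightarrow> real"
  assumes I: "I \<noteq> {}" "finite I"
    and X_meas: "\<And>i. i \<in> I \<Longrightarrow> X i \<in> borel_measurable M"
    and X_indep: "indep_vars (\<lambda>_. borel) X I"
    and X_law: "\<And>i. i \<in> I \<Longrightarrow> distr M borel (X i) = D"
    and f_meas[measurable]: "f \<in> borel_measurable borel"
  shows "prob {\<omega> \<in> space M. (\<Sum>i\<in>I. f (X i \<omega>)) \<le> c}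
       = measure (PiM I (\<lambda>_. D)) {x \<in> space (PiM I (\<lambda>_. D)). (\<Sum>i\<in>I. f (x i)) \<le> c}"
proof -
  let ?joint = "\<lambda>\<omega>. \<lambda>i\<in>I. X i \<omega>"
  let ?A = "{x \<in> space (PiM I (\<lambda>_. borel)). (\<Sum>i\<in>I. f (x i)) \<le> c}"
  have joint_meas: "?joint \<in> measurable M (PiM I (\<lambda>_. borel))"
    using X_meas by (intro measurable_restrict) auto
  have A_sets: "?A \<in> sets (PiM I (\<lambda>_. borel))" using I by measurable
  obtain i0 where i0: "i0 \<in> I" using I by blast
  have "sets D = sets borel" unfolding X_law[OF i0, symmetric] by simp
  hence space_eq: "space (PiM I (\<lambda>_. D)) = space (PiM I (\<lambda>_. borel))"
    by (simp add: space_PiM sets_eq_imp_space_eq)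
  have "{\<omega> \<in> space M. (\<Sum>i\<in>I. f (X i \<omega>)) \<le> c} = ?joint -` ?A \<inter> space M"
    by (auto simp: space_PiM)
  hence "prob {\<omega> \<in> space M. (\<Sum>i\<in>I. f (X i \<omega>)) \<le> c}
      = measure (distr M (PiM I (\<lambda>_. borel)) ?joint) ?A"
    using joint_meas A_sets by (simp add: measure_distr)
  also have "distr M (PiM I (\<lambda>_. borel)) ?joint = (\<Pi>\<^sub>M i\<in>I. distr M borel (X i))"
    using indep_vars_iff_distr_eq_PiM'[OF I(1), where M'="\<lambda>_. borel" and X=X] X_meas X_indep
    by auto
  also have "\<dots> = PiM I (\<lambda>_. D)" using X_law by (intro PiM_cong) auto
  finally show ?thesis using space_eq by simp
qed

lemma PiM_sum_le_reindex:
  fixes F :: "'b \<Rightarrow> real"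
  assumes D: "prob_space D" and e: "bij_betw e I K"
    and F[measurable]: "F \<in> borel_measurable D"
  shows "measure (PiM I (\<lambda>_. D)) {x \<in> space (PiM I (\<lambda>_. D)). (\<Sum>i\<in>I. F (x i)) \<le> c}
       = measure (PiM K (\<lambda>_. D)) {x \<in> space (PiM K (\<lambda>_. D)). (\<Sum>k\<in>K. F (x k)) \<le> c}"
proof -
  have e_inj: "inj_on e I" and e_into: "e \<in> I \<rightarrow> K" using e by (auto simp: bij_betw_def)
  let ?t = "\<lambda>\<omega>. \<lambda>i\<in>I. \<omega> (e i)"
  let ?A = "{x \<in> space (PiM I (\<lambda>_. D)). (\<Sum>i\<in>I. F (x i)) \<le> c}"
  have t_law: "distr (PiM K (\<lambda>_. D)) (PiM I (\<lambda>_. D)) ?t = PiM I (\<lambda>_. D)"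
    using distr_PiM_reindex[of K "\<lambda>_. D" e I] D e_inj e_into by simp
  have t_meas: "?t \<in> measurable (PiM K (\<lambda>_. D)) (PiM I (\<lambda>_. D))"
    using e_into by (intro measurable_restrict measurable_component_singleton) auto
  have A_sets: "?A \<in> sets (PiM I (\<lambda>_. D))" by measurable
  have preimage: "?t -` ?A \<inter> space (PiM K (\<lambda>_. D))
      = {x \<in> space (PiM K (\<lambda>_. D)). (\<Sum>k\<in>K. F (x k)) \<le> c}"
  proof -
    have "\<And>x. (\<Sum>i\<in>I. F (x (e i))) = (\<Sum>k\<in>K. F (x k))"
      using sum.reindex_bij_betw[OF e] by simp
    moreover have "\<And>x. x \<in> space (PiM K (\<lambda>_. D)) \<Longrightarrow> ?t x \<in> space (PiM I (\<lambda>_. D))"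
      using measurable_space[OF t_meas] by blast
    ultimately show ?thesis by auto
  qed
  have "measure (PiM I (\<lambda>_. D)) ?A = measure (PiM K (\<lambda>_. D)) (?t -` ?A \<inter> space (PiM K (\<lambda>_. D)))"
    by (subst t_law[symmetric]) (simp add: measure_distr t_meas A_sets)
  then show ?thesis using preimage by simp
qed

lemma (in prob_space) prob_iid_sum_le_eq:
  fixes X :: "'i \<Rightarrow> 'a \<Rightarrow> 'b::topological_space" and Y :: "'k \<Rightarrow> 'a \<Rightarrow> 'b"
    and f :: "'b \<Rightarrow> real"
  assumes I: "I \<noteq> {}" "finite I" and e: "bij_betw e I K"
    and X_meas: "\<And>i. i \<in> I \<Longrightarrow> X i \<in> borel_measurable M"
    and X_indep: "indep_vars (\<lambda>_. borel) X I"
    and X_law: "\<And>i. i \<in> I \<Longrightarrow> distr M borel (X i) = D"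
    and Y_meas: "\<And>k. k \<in> K \<Longrightarrow> Y k \<in> borel_measurable M"
    and Y_indep: "indep_vars (\<lambda>_. borel) Y K"
    and Y_law: "\<And>k. k \<in> K \<Longrightarrow> distr M borel (Y k) = D"
    and f_meas[measurable]: "f \<in> borel_measurable borel"
  shows "prob {\<omega> \<in> space M. (\<Sum>i\<in>I. f (X i \<omega>)) \<le> c}
       = prob {\<omega> \<in> space M. (\<Sum>k\<in>K. f (Y k \<omega>)) \<le> c}"
proof -
  have K: "K \<noteq> {}" "finite K"
    using I bij_betw_finite[OF e] e by (auto simp: bij_betw_def)
  obtain i0 where i0: "i0 \<in> I" using I by blast
  have D: "prob_space D"
    unfolding X_law[OF i0, symmetric] by (rule prob_space_distr[OF X_meas[OF i0]])
  have sets_D: "sets D = sets borel" unfolding X_law[OF i0, symmetric] by simp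
  have "f \<in> borel_measurable D" using f_meas unfolding measurable_cong_sets[OF sets_D refl] .
  have "prob {\<omega> \<in> space M. (\<Sum>i\<in>I. f (X i \<omega>)) \<le> c}
      = measure (PiM I (\<lambda>_. D)) {x \<in> space (PiM I (\<lambda>_. D)). (\<Sum>i\<in>I. f (x i)) \<le> c}"
    by (rule prob_iid_sum_le[OF I _ X_indep _ f_meas]) (use X_meas X_law in auto)
  also have "\<dots> = measure (PiM K (\<lambda>_. D)) {x \<in> space (PiM K (\<lambda>_. D)). (\<Sum>k\<in>K. f (x k)) \<le> c}"
    using \<open>f \<in> borel_measurable D\<close> by (rule PiM_sum_le_reindex[OF D e])
  also have "\<dots> = prob {\<omega> \<in> space M. (\<Sum>k\<in>K. f (Y k \<omega>)) \<le> c}"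
    by (rule prob_iid_sum_le[OF K _ Y_indep _ f_meas, symmetric]) (use Y_meas Y_law in auto)
  finally show ?thesis .
qed

text \<open>The post-HARQ outage event after \<open>n\<close> rounds involves \<open>n * L\<close> i.i.d. CN(0,1)
  gains, so it has the probability of the non-HARQ outage event with diversity
  order \<open>n * L\<close> at rate \<open>R / n\<close>.\<close>

lemma (in prob_space) harq_eps_eq_nonharq_eps:
  fixes h :: "nat \<Rightarrow> nat \<Rightarrow> 'a \<Rightarrow> complex" and g :: "nat \<Rightarrow> 'a \<Rightarrow> complex"
  assumes L: "L \<ge> 1" and n: "n \<ge> 1"
    and h_distr: "\<And>i j. i \<ge> 1 \<Longrightarrow> 1 \<le> j \<Longrightarrow> j \<le> L \<Longrightarrow>
                    distributed M lborel (h i j) CN01_density"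
    and h_indep: "indep_vars (\<lambda>_. borel) (\<lambda>(i, j). h i j) ({1..} \<times> {1..L})"
    and g_distr: "\<And>k. 1 \<le> k \<Longrightarrow> k \<le> n * L \<Longrightarrow> distributed M lborel (g k) CN01_density"
    and g_indep: "indep_vars (\<lambda>_. borel) g {1..n * L}"
  shows "harq_eps M SNR L n h R = nonharq_eps M SNR (n * L) g (R / real n)"
proof -
  define f where "f = (\<lambda>z::complex. log 2 (1 + SNR * (cmod z)\<^sup>2))"
  define I where "I = {1..n} \<times> {1..L}"
  define H where "H = (\<lambda>(i, j). h i j)"
  define D where "D = density lborel CN01_density"
  have pos: "real L > 0" "real n > 0" using L n by auto
  have f_meas: "f \<in> borel_measurable borel" unfolding f_def by measurable
  obtain e where e: "bij_betw e I {1..n * L}"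
    using finite_same_card_bij[of I "{1..n * L}"] by (auto simp: I_def card_cartesian_product)
  have H_law: "distr M borel (H p) = D" and H_meas: "H p \<in> borel_measurable M" if "p \<in> I" for p
    using that distributed_distr_borel[OF h_distr] distributed_measurable[OF h_distr]
    by (auto simp: I_def H_def D_def)
  have g_law: "distr M borel (g k) = D" and g_meas: "g k \<in> borel_measurable M"
    if "k \<in> {1..n * L}" for k
    using that distributed_distr_borel[OF g_distr] distributed_measurable[OF g_distr]
    by (auto simp: D_def)
  have H_indep: "indep_vars (\<lambda>_. borel) H I"
    unfolding H_def I_def by (rule indep_vars_subset[OF h_indep]) auto
  have I_ne: "I \<noteq> {}" and I_fin: "finite I" using L n by (auto simp: I_def)
  have "harq_eps M SNR L n h R = prob {\<omega> \<in> space M. (\<Sum>p\<in>I. f (H p \<omega>)) \<le> real L * R}"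
  proof -
    have "harq_acc SNR L h n \<omega> = (\<Sum>p\<in>I. f (H p \<omega>)) / real L" for \<omega>
      by (simp add: harq_acc_def harq_C_def I_def H_def f_def sum.cartesian_product
          sum_divide_distrib split_beta)
    then show ?thesis using pos(1) by (simp add: harq_eps_def divide_le_eq mult.commute)
  qed
  also have "\<dots> = prob {\<omega> \<in> space M. (\<Sum>k\<in>{1..n * L}. f (g k \<omega>)) \<le> real L * R}"
    by (rule prob_iid_sum_le_eq[OF I_ne I_fin e H_meas H_indep H_law g_meas g_indep g_law f_meas])
  also have "\<dots> = nonharq_eps M SNR (n * L) g (R / real n)"
  proof -
    have "(1 / real (n * L)) * (\<Sum>k=1..n * L. f (g k \<omega>)) \<le> R / real n
        \<longleftrightarrow> (\<Sum>k\<in>{1..n * L}. f (g k \<omega>)) \<le> real L * R" for \<omega>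
      using pos by (simp add: field_simps)
    then show ?thesis unfolding nonharq_eps_def f_def by simp
  qed
  finally show ?thesis .
qed

lemma harq_T_ge_1: "n \<ge> 1 \<Longrightarrow> harq_T SNR L n h R \<omega> \<ge> 1"
  unfolding harq_T_def by (auto intro: LeastI2_ex)

lemma harq_T_le: "harq_T SNR L n h R \<omega> \<le> n"
  unfolding harq_T_def by auto

lemma harq_T_mono:
  assumes "R' \<le> R"
  shows "harq_T SNR L n h R' \<omega> \<le> harq_T SNR L n h R \<omega>"
proof (cases "\<exists>t. 1 \<le> t \<and> harq_acc SNR L h t \<omega> > R")
  case True
  define t0 where "t0 = (LEAST t. 1 \<le> t \<and> harq_acc SNR L h t \<omega> > R)"
  have "1 \<le> t0 \<and> harq_acc SNR L h t0 \<omega> > R"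
    unfolding t0_def using True by (rule LeastI_ex)
  hence t0: "1 \<le> t0 \<and> harq_acc SNR L h t0 \<omega> > R'" using assms by auto
  hence "(LEAST t. 1 \<le> t \<and> harq_acc SNR L h t \<omega> > R') \<le> t0" by (rule Least_le)
  thus ?thesis using True t0 unfolding harq_T_def t0_def by auto
next
  case False
  thus ?thesis unfolding harq_T_def by auto
qed

lemma (in prob_space) harq_T_measurable:
  assumes h_meas: "\<And>i j. 1 \<le> i \<Longrightarrow> 1 \<le> j \<Longrightarrow> j \<le> L \<Longrightarrow> h i j \<in> borel_measurable M"
  shows "(\<lambda>\<omega>. real (harq_T SNR L n h R \<omega>)) \<in> borel_measurable M"
proof -
  have [measurable]: "harq_acc SNR L h t \<in> borel_measurable M" for t
  proof -
    have "(\<lambda>\<omega>. log 2 (1 + SNR * (cmod (h i j \<omega>))\<^sup>2)) \<in> borel_measurable M"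
      if "i \<in> {1..t}" "j \<in> {1..L}" for i j
      using h_meas that
      by (auto intro!: measurable_compose[OF _ borel_measurable_continuous_onI] continuous_intros)
    then show ?thesis unfolding harq_acc_def harq_C_def
      by (auto intro!: borel_measurable_sum borel_measurable_times)
  qed
  show ?thesis unfolding harq_T_def by measurable
qed

lemma (in prob_space) harq_ET_ge_1_mono:
  assumes n: "n \<ge> 1"
    and h_meas: "\<And>i j. 1 \<le> i \<Longrightarrow> 1 \<le> j \<Longrightarrow> j \<le> L \<Longrightarrow> h i j \<in> borel_measurable M"
  shows "(\<integral>\<omega>. real (harq_T SNR L n h R \<omega>) \<partial>M) \<ge> 1"
    and "R' \<le> R \<Longrightarrow>
      (\<integral>\<omega>. real (harq_T SNR L n h R' \<omega>) \<partial>M) \<le> (\<integral>\<omega>. real (harq_T SNR L n h R \<omega>) \<partial>M)"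
proof -
  have int: "integrable M (\<lambda>\<omega>. real (harq_T SNR L n h R \<omega>))" for R
    by (rule integrable_const_bound[where B="real n"])
      (auto simp: harq_T_le harq_T_measurable[OF h_meas])
  have "(\<integral>\<omega>. 1 \<partial>M) \<le> (\<integral>\<omega>. real (harq_T SNR L n h R \<omega>) \<partial>M)"
    by (rule integral_mono[OF _ int]) (use harq_T_ge_1[OF n] in auto)
  then show "(\<integral>\<omega>. real (harq_T SNR L n h R \<omega>) \<partial>M) \<ge> 1" by (simp add: prob_space)
  show "R' \<le> R \<Longrightarrow>
      (\<integral>\<omega>. real (harq_T SNR L n h R' \<omega>) \<partial>M) \<le> (\<integral>\<omega>. real (harq_T SNR L n h R \<omega>) \<partial>M)"
    by (rule integral_mono[OF int int]) (simp add: harq_T_mono)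
qed

theorem theorem1:
  fixes P :: "'a measure"
    and SNR :: real and L M :: nat
    and h :: "nat \<Rightarrow> nat \<Rightarrow> 'a \<Rightarrow> complex"
    and g :: "nat \<Rightarrow> 'a \<Rightarrow> complex"
    and Rstar Rinit :: real
  assumes "prob_space P"
    and "SNR > 0" and "L \<ge> 1" and "M \<ge> 1"
    and h_distr: "\<And>i j. i \<ge> 1 \<Longrightarrow> 1 \<le> j \<Longrightarrow> j \<le> L \<Longrightarrow>
                    distributed P lborel (h i j) CN01_density"
    and h_indep: "prob_space.indep_vars P (\<lambda>_. borel) (\<lambda>(i, j). h i j) ({1..} \<times> {1..L})"
    and g_distr: "\<And>k. 1 \<le> k \<Longrightarrow> k \<le> M * L \<Longrightarrow> distributed P lborel (g k) CN01_density"
    and g_indep: "prob_space.indep_vars P (\<lambda>_. borel) g {1..M * L}"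
    and Rstar_pos: "Rstar > 0"
    and Rstar_max: "\<And>R. R > 0 \<Longrightarrow> nonharq_goodput P SNR (M * L) g R \<le> nonharq_goodput P SNR (M * L) g Rstar"
    and Rstar_largest: "\<And>R. R > 0 \<Longrightarrow>
          nonharq_goodput P SNR (M * L) g R = nonharq_goodput P SNR (M * L) g Rstar \<Longrightarrow> R \<le> Rstar"
    and Rinit_pos: "Rinit > 0"
    and Rinit_max: "\<And>R. R > 0 \<Longrightarrow> harq_eta P SNR L M h R \<le> harq_eta P SNR L M h Rinit"
  shows "Rinit / real M \<le> Rstar"
proof -
  interpret prob_space P by fact
  define G where "G = nonharq_goodput P SNR (M * L) g"
  define E where "E = (\<lambda>R. \<integral>\<omega>. real (harq_T SNR L M h R \<omega>) \<partial>P)"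
  have h_meas: "\<And>i j. 1 \<le> i \<Longrightarrow> 1 \<le> j \<Longrightarrow> j \<le> L \<Longrightarrow> h i j \<in> borel_measurable P"
    using distributed_measurable[OF h_distr] by simp
  have E_ge_1: "E R \<ge> 1" for R
    unfolding E_def by (rule harq_ET_ge_1_mono(1)[OF \<open>M \<ge> 1\<close> h_meas])
  have E_mono: "E R' \<le> E R" if "R' \<le> R" for R R'
    unfolding E_def by (rule harq_ET_ge_1_mono(2)[OF \<open>M \<ge> 1\<close> h_meas that])
  have eta_eq: "harq_eta P SNR L M h R = real M * G (R / real M) / E R" for R
    using harq_eps_eq_nonharq_eps[OF \<open>L \<ge> 1\<close> \<open>M \<ge> 1\<close> h_distr h_indep g_distr g_indep]
      \<open>M \<ge> 1\<close> unfolding harq_eta_def G_def nonharq_goodput_def E_def by simp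
  have G_nonneg: "0 \<le> G R" if "R > 0" for R
    using that unfolding G_def nonharq_goodput_def nonharq_eps_def by simp
  show ?thesis
  proof (rule scaled_maximizer_le_largest_maximizer[where G=G and E=E])
    show "real M > 0" using \<open>M \<ge> 1\<close> by simp
    show "E R > 0" for R using E_ge_1[of R] by simp
    show "E R' \<le> E R" if "R' \<le> R" for R R' using E_mono[OF that] .
    show "real M * G (R / real M) / E R \<le> real M * G (Rinit / real M) / E Rinit"
      if "R > 0" for R
      using Rinit_max[OF that] unfolding eta_eq .
  qed (use Rstar_pos Rinit_pos G_nonneg Rstar_max Rstar_largest in \<open>auto simp: G_def\<close>)
qed

end
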